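(* For terms $\Gamma\vdash s,t:X$ of the language $\mathbf P$, $s\approx_{\mathbf P}t$ if and only if $[\![s]\!]=[\![t]\!]$ as subprobability kernels $[\![\Gamma]\!]\to D_{\le1}([\![X]\!])$. That is, $\mathrm{FinSubStoch}$ is fully abstract for $\mathbf P$.
   Context: $\mathbf{PSL}$ is the first-order language with types $A::=X\mid\mathsf{unit}\mid A\ast A$ ($X$ ranging over finite sets) and terms $t::=x\mid()\mid(t,t)\mid\pi_i t\mid \underline f(t)\mid\mathrm{let}\ x=t_1\ \mathrm{in}\ t_2$, where $\underline f:A\to B$ ranges over all subprobability kernels between the finite sets interpreting $A,B$ (including scoring and exact conditioning). $\mathbf P$ extends $\mathbf{PSL}$ with $\mathrm{if}\ t_1\ \mathrm{then}\ t_2\ \mathrm{else}\ t_3$ (with $\Gamma\vdash t_1:2$, $\Gamma\vdash t_2,t_3:A$). Types denote finite sets ($[\![\mathsf{unit}]\!]=\{*\}$, $[\![A\ast B]\!]=[\![A]\!]\times[\![B]\!]$) and terms $\Gamma\vdash t:A$ denote subprobability kernels: $[\![x]\!](a|\gamma)=[a=\gamma_x]$; $[\![()]\!]( *|\gamma)=1$; $[\![(s,t)]\!]((a,b)|\gamma)=[\![s]\!](a|\gamma)[\![t]\!](b|\gamma)$; $[\![\pi_1t]\!](a|\gamma)=\sum_b[\![t]\!]((a,b)|\gamma)$ (similarly $\pi_2$); $[\![\underline f(t)]\!](b|\gamma)=\sum_af(b|a)[\![t]\!](a|\gamma)$; $[\![\mathrm{let}\ x=s\ \mathrm{in}\ t]\!](b|\gamma)=\sum_a[\![s]\!](a|\gamma)[\![t]\!](b|\gamma,a)$;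 $[\![\mathrm{if}\ t_1\ \mathrm{then}\ t_2\ \mathrm{else}\ t_3]\!](a|\gamma)=[\![t_2]\!](a|\gamma)[\![t_1]\!](\mathrm{true}|\gamma)+[\![t_3]\!](a|\gamma)[\![t_1]\!](\mathrm{false}|\gamma)$. For a subdistribution $\varphi$, $\mathsf{normalize}(\varphi)=\varphi/Z$ with $Z=\sum_x\varphi(x)$ if $Z\ne0$, and $0$ otherwise. Closed $s,t$ are observationally equivalent, $s\approx t$, if $\mathsf{normalize}([\![s]\!])=\mathsf{normalize}([\![t]\!])$. Open terms are branching equivalent, $s\approx_{\mathbf P}t$, if $C[s]\approx C[t]$ for every closed well-typed $\mathbf P$ context $C[-]$. *)

theory Defs
  imports Complex_Main
begin

text \<open>Base types X range over finite sets; up to bijection these are the sets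
  {0..<n}, so a base type is represented by its cardinality n.\<close>

datatype ty = Base nat | Unit | Prod ty ty

datatype val = VBase nat | VUnit | VPair val val

fun tyset :: "ty \<Rightarrow> val set" where
  "tyset (Base n) = VBase ` {..<n}"
| "tyset Unit = {VUnit}"
| "tyset (Prod A B) = (\<lambda>(a, b). VPair a b) ` (tyset A \<times> tyset B)"

definition bool_ty :: ty where "bool_ty = Base 2"
definition vtrue :: val where "vtrue = VBase 1"
definition vfalse :: val where "vfalse = VBase 0"

text \<open>Subprobability kernels f : A \<rightarrow> B; the number f a b is f(b|a).\<close>
definition subkernel :: "ty \<Rightarrow> ty \<Rightarrow> (val \<Rightarrow> val \<Rightarrow> real) \<Rightarrow> bool" where
  "subkernel A B f \<longleftrightarrow>
     (\<forall>a\<in>tyset A. (\<forall>b\<in>tyset B. 0 \<le> f a b) \<and> (\<Sum>b\<in>tyset B. f a b) \<le> 1)"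

datatype tm =
    Var nat
  | UnitT
  | Pair tm tm
  | Fst ty tm
  | Snd ty tm
  | Prim ty ty "val \<Rightarrow> val \<Rightarrow> real" tm
  | Let ty tm tm       \<comment> \<open>let x : A = s in t ; x is de Bruijn index 0 in t\<close>
  | If tm tm tm

inductive typed :: "ty list \<Rightarrow> tm \<Rightarrow> ty \<Rightarrow> bool" where
  T_Var: "i < length \<Gamma> \<Longrightarrow> typed \<Gamma> (Var i) (\<Gamma> ! i)"
| T_Unit: "typed \<Gamma> UnitT Unit"
| T_Pair: "typed \<Gamma> s A \<Longrightarrow> typed \<Gamma> t B \<Longrightarrow> typed \<Gamma> (Pair s t) (Prod A B)"
| T_Fst: "typed \<Gamma> t (Prod A B) \<Longrightarrow> typed \<Gamma> (Fst B t) A"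
| T_Snd: "typed \<Gamma> t (Prod A B) \<Longrightarrow> typed \<Gamma> (Snd A t) B"
| T_Prim: "subkernel A B f \<Longrightarrow> typed \<Gamma> t A \<Longrightarrow> typed \<Gamma> (Prim A B f t) B"
| T_Let: "typed \<Gamma> s A \<Longrightarrow> typed (A # \<Gamma>) t B \<Longrightarrow> typed \<Gamma> (Let A s t) B"
| T_If: "typed \<Gamma> t1 bool_ty \<Longrightarrow> typed \<Gamma> t2 A \<Longrightarrow> typed \<Gamma> t3 A \<Longrightarrow> typed \<Gamma> (If t1 t2 t3) A"

section \<open>Denotational semantics: den t \<gamma> a = [[t]](a|\<gamma>)\<close>

fun den :: "tm \<Rightarrow> val list \<Rightarrow> val \<Rightarrow> real" where
  "den (Var i) \<gamma> a = (if a = \<gamma> ! i then 1 else 0)"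
| "den UnitT \<gamma> a = (if a = VUnit then 1 else 0)"
| "den (Pair s t) \<gamma> a = (case a of VPair x y \<Rightarrow> den s \<gamma> x * den t \<gamma> y | _ \<Rightarrow> 0)"
| "den (Fst B t) \<gamma> a = (\<Sum>b\<in>tyset B. den t \<gamma> (VPair a b))"
| "den (Snd A t) \<gamma> b = (\<Sum>a\<in>tyset A. den t \<gamma> (VPair a b))"
| "den (Prim A B f t) \<gamma> b = (\<Sum>a\<in>tyset A. f a b * den t \<gamma> a)"
| "den (Let A s t) \<gamma> b = (\<Sum>a\<in>tyset A. den s \<gamma> a * den t (a # \<gamma>) b)"
| "den (If t1 t2 t3) \<gamma> a = den t2 \<gamma> a * den t1 \<gamma> vtrue + den t3 \<gamma> a * den t1 \<gamma> vfalse"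

definition envs :: "ty list \<Rightarrow> val list set" where
  "envs \<Gamma> = {\<gamma>. list_all2 (\<lambda>v A. v \<in> tyset A) \<gamma> \<Gamma>}"

definition normalize_on :: "val set \<Rightarrow> (val \<Rightarrow> real) \<Rightarrow> val \<Rightarrow> real" where
  "normalize_on S \<phi> x = (let Z = (\<Sum>y\<in>S. \<phi> y) in if Z \<noteq> 0 then \<phi> x / Z else 0)"

definition obs_equiv :: "ty \<Rightarrow> tm \<Rightarrow> tm \<Rightarrow> bool" where
  "obs_equiv B s t \<longleftrightarrow>
     (\<forall>b\<in>tyset B. normalize_on (tyset B) (den s []) b = normalize_on (tyset B) (den t []) b)"

datatype ctx =
    Hole
  | CPairL ctx tm
  | CPairR tm ctx
  | CFst ty ctx
  | CSnd ty ctx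
  | CPrim ty ty "val \<Rightarrow> val \<Rightarrow> real" ctx
  | CLetL ty ctx tm
  | CLetR ty tm ctx
  | CIf1 ctx tm tm
  | CIf2 tm ctx tm
  | CIf3 tm tm ctx

fun plug :: "ctx \<Rightarrow> tm \<Rightarrow> tm" where
  "plug Hole u = u"
| "plug (CPairL C t) u = Pair (plug C u) t"
| "plug (CPairR s C) u = Pair s (plug C u)"
| "plug (CFst B C) u = Fst B (plug C u)"
| "plug (CSnd A C) u = Snd A (plug C u)"
| "plug (CPrim A B f C) u = Prim A B f (plug C u)"
| "plug (CLetL A C t) u = Let A (plug C u) t"
| "plug (CLetR A s C) u = Let A s (plug C u)"
| "plug (CIf1 C t2 t3) u = If (plug C u) t2 t3"
| "plug (CIf2 t1 C t3) u = If t1 (plug C u) t3"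
| "plug (CIf3 t1 t2 C) u = If t1 t2 (plug C u)"

text \<open>ctx_typed \<Gamma> A C \<Delta> B: C has a hole of type \<Gamma> \<turnstile> _ : A and \<Delta> \<turnstile> C[_] : B.\<close>
inductive ctx_typed :: "ty list \<Rightarrow> ty \<Rightarrow> ctx \<Rightarrow> ty list \<Rightarrow> ty \<Rightarrow> bool" where
  C_Hole: "ctx_typed \<Gamma> A Hole \<Gamma> A"
| C_PairL: "ctx_typed \<Gamma> A C \<Delta> B1 \<Longrightarrow> typed \<Delta> t B2 \<Longrightarrow> ctx_typed \<Gamma> A (CPairL C t) \<Delta> (Prod B1 B2)"
| C_PairR: "typed \<Delta> s B1 \<Longrightarrow> ctx_typed \<Gamma> A C \<Delta> B2 \<Longrightarrow> ctx_typed \<Gamma> A (CPairR s C) \<Delta> (Prod B1 B2)"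
| C_Fst: "ctx_typed \<Gamma> A C \<Delta> (Prod B1 B2) \<Longrightarrow> ctx_typed \<Gamma> A (CFst B2 C) \<Delta> B1"
| C_Snd: "ctx_typed \<Gamma> A C \<Delta> (Prod B1 B2) \<Longrightarrow> ctx_typed \<Gamma> A (CSnd B1 C) \<Delta> B2"
| C_Prim: "subkernel B1 B2 f \<Longrightarrow> ctx_typed \<Gamma> A C \<Delta> B1 \<Longrightarrow> ctx_typed \<Gamma> A (CPrim B1 B2 f C) \<Delta> B2"
| C_LetL: "ctx_typed \<Gamma> A C \<Delta> B1 \<Longrightarrow> typed (B1 # \<Delta>) t B2 \<Longrightarrow> ctx_typed \<Gamma> A (CLetL B1 C t) \<Delta> B2"
| C_LetR: "typed \<Delta> s B1 \<Longrightarrow> ctx_typed \<Gamma> A C (B1 # \<Delta>) B2 \<Longrightarrow> ctx_typed \<Gamma> A (CLetR B1 s C) \<Delta> B2"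
| C_If1: "ctx_typed \<Gamma> A C \<Delta> bool_ty \<Longrightarrow> typed \<Delta> t2 B \<Longrightarrow> typed \<Delta> t3 B \<Longrightarrow> ctx_typed \<Gamma> A (CIf1 C t2 t3) \<Delta> B"
| C_If2: "typed \<Delta> t1 bool_ty \<Longrightarrow> ctx_typed \<Gamma> A C \<Delta> B \<Longrightarrow> typed \<Delta> t3 B \<Longrightarrow> ctx_typed \<Gamma> A (CIf2 t1 C t3) \<Delta> B"
| C_If3: "typed \<Delta> t1 bool_ty \<Longrightarrow> typed \<Delta> t2 B \<Longrightarrow> ctx_typed \<Gamma> A C \<Delta> B \<Longrightarrow> ctx_typed \<Gamma> A (CIf3 t1 t2 C) \<Delta> B"

definition branch_equiv :: "ty list \<Rightarrow> ty \<Rightarrow> tm \<Rightarrow> tm \<Rightarrow> bool" where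
  "branch_equiv \<Gamma> A s t \<longleftrightarrow>
     (\<forall>C B. ctx_typed \<Gamma> A C [] B \<longrightarrow> obs_equiv B (plug C s) (plug C t))"

end

theory Submission
  imports Defs
begin

text \<open>Denotational equality implies branching equivalence because the denotation of a
  plugged context depends only on the denotation of the plugged term. Conversely, fix an
  environment \<gamma> and an outcome a; the context
  \<open>if coin then (\<lambda>x. [x = a])(let \<gamma> in -) else false\<close>, with a fair coin, turns a term u into
  the subdistribution (true \<mapsto> [[u]](a|\<gamma>)/2, false \<mapsto> 1/2). The constant mass on false
  survives normalization, so the normalized weight of false is 1/(1 + [[u]](a|\<gamma>)), from which
  [[u]](a|\<gamma>) can be read off.\<close>

lemma finite_tyset [simp]: "finite (tyset A)"
  by (induction A) auto

lemma Cons_in_envs_iff: "v # \<delta> \<in> envs (B # \<Delta>) \<longleftrightarrow> v \<in> tyset B \<and> \<delta> \<in> envs \<Delta>"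
  by (simp add: envs_def)

lemma vtrue_neq_vfalse: "vtrue \<noteq> vfalse"
  by (simp add: vtrue_def vfalse_def)

lemma tyset_bool_ty: "tyset bool_ty = {vfalse, vtrue}"
  by (auto simp: bool_ty_def vtrue_def vfalse_def)

lemma sum_indicator_mult:
  assumes "finite S" and "v \<in> S"
  shows "(\<Sum>x\<in>S. (if x = v then 1 else 0) * g x) = (g v :: 'a::semiring_1)"
proof -
  have "(\<Sum>x\<in>S. (if x = v then 1 else 0) * g x) = (\<Sum>x\<in>S. if x = v then g x else 0)"
    by (rule sum.cong) auto
  then show ?thesis using assms by simp
qed

lemma den_plug_cong:
  assumes "ctx_typed \<Gamma> A C \<Delta> B"
    and "\<forall>\<gamma>\<in>envs \<Gamma>. \<forall>a\<in>tyset A. den s \<gamma> a = den t \<gamma> a"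
    and "\<delta> \<in> envs \<Delta>" and "b \<in> tyset B"
  shows "den (plug C s) \<delta> b = den (plug C t) \<delta> b"
  using assms
proof (induction arbitrary: \<delta> b rule: ctx_typed.induct)
  case (C_LetR \<Delta> s B1 \<Gamma> A C B2)
  then show ?case by (auto intro!: sum.cong simp: Cons_in_envs_iff)
next
  case (C_If1 \<Gamma> A C \<Delta> t2 B t3)
  then show ?case by (auto simp: tyset_bool_ty)
qed (auto intro!: sum.cong)

lemma obs_equiv_if_den_eq:
  assumes "\<And>b. b \<in> tyset B \<Longrightarrow> den s [] b = den t [] b"
  shows "obs_equiv B s t"
proof -
  have "(\<Sum>b\<in>tyset B. den s [] b) = (\<Sum>b\<in>tyset B. den t [] b)"
    using assms by (rule sum.cong[OF refl])
  then show ?thesis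
    using assms by (simp add: obs_equiv_def normalize_on_def)
qed

definition dirac :: "ty \<Rightarrow> val \<Rightarrow> tm" where
  "dirac B v = Prim Unit B (\<lambda>_ b. if b = v then 1 else 0) UnitT"

lemma typed_dirac: "typed \<Delta> (dirac B v) B"
proof -
  have "subkernel Unit B (\<lambda>_ b. if b = v then 1 else 0)"
    unfolding subkernel_def by (auto simp: sum.delta)
  then show ?thesis unfolding dirac_def by (intro T_Prim T_Unit)
qed

lemma den_dirac: "den (dirac B v) \<delta> b = (if b = v then 1 else 0)"
  by (simp add: dirac_def)

text \<open>The innermost let binds de Bruijn index 0 to the head of \<gamma>.\<close>

fun let_env :: "ty list \<Rightarrow> val list \<Rightarrow> tm \<Rightarrow> tm" where
  "let_env (A # \<Gamma>) (v # \<gamma>) s = let_env \<Gamma> \<gamma> (Let A (dirac A v) s)"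
| "let_env _ _ s = s"

fun let_env_ctx :: "ty list \<Rightarrow> val list \<Rightarrow> ctx \<Rightarrow> ctx" where
  "let_env_ctx (A # \<Gamma>) (v # \<gamma>) C = let_env_ctx \<Gamma> \<gamma> (CLetR A (dirac A v) C)"
| "let_env_ctx _ _ C = C"

lemma plug_let_env_ctx: "plug (let_env_ctx \<Gamma> \<gamma> C) s = let_env \<Gamma> \<gamma> (plug C s)"
  by (induction \<Gamma> \<gamma> C rule: let_env_ctx.induct) auto

lemma den_let_env:
  assumes "list_all2 (\<lambda>v A. v \<in> tyset A) \<gamma> \<Gamma>"
  shows "den (let_env \<Gamma> \<gamma> s) \<delta> b = den s (\<gamma> @ \<delta>) b"
  using assms
proof (induction \<gamma> \<Gamma> arbitrary: s rule: list_all2_induct)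
  case (Cons v \<gamma> A \<Gamma>)
  have "den (Let A (dirac A v) s) (\<gamma> @ \<delta>) b = den s (v # \<gamma> @ \<delta>) b"
    using Cons(1) by (simp add: den_dirac sum_indicator_mult)
  then show ?case using Cons by simp
qed simp

lemma ctx_typed_let_env_ctx:
  assumes "list_all2 (\<lambda>v A. v \<in> tyset A) \<gamma> \<Gamma>" and "ctx_typed \<Gamma>\<^sub>0 A\<^sub>0 C (\<Gamma> @ \<Delta>) B"
  shows "ctx_typed \<Gamma>\<^sub>0 A\<^sub>0 (let_env_ctx \<Gamma> \<gamma> C) \<Delta> B"
  using assms
proof (induction \<gamma> \<Gamma> arbitrary: C rule: list_all2_induct)
  case (Cons v \<gamma> A \<Gamma>)
  have "ctx_typed \<Gamma>\<^sub>0 A\<^sub>0 (CLetR A (dirac A v) C) (\<Gamma> @ \<Delta>) B"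
    using Cons(4) by (intro C_LetR typed_dirac) simp
  then show ?case using Cons by simp
qed simp

definition fair_coin :: tm where
  "fair_coin = Prim Unit bool_ty (\<lambda>_ _. 1/2) UnitT"

definition indicator_kernel :: "val \<Rightarrow> val \<Rightarrow> val \<Rightarrow> real" where
  "indicator_kernel a x b = (if x = a \<and> b = vtrue then 1 else 0)"

definition probe_ctx :: "ty list \<Rightarrow> val list \<Rightarrow> ty \<Rightarrow> val \<Rightarrow> ctx" where
  "probe_ctx \<Gamma> \<gamma> A a =
     CIf2 fair_coin (CPrim A bool_ty (indicator_kernel a) (let_env_ctx \<Gamma> \<gamma> Hole))
       (dirac bool_ty vfalse)"

lemma ctx_typed_probe_ctx:
  assumes "\<gamma> \<in> envs \<Gamma>"
  shows "ctx_typed \<Gamma> A (probe_ctx \<Gamma> \<gamma> A a) [] bool_ty"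
proof -
  have "subkernel A bool_ty (indicator_kernel a)"
    by (auto simp: subkernel_def indicator_kernel_def tyset_bool_ty vtrue_neq_vfalse)
  moreover have "subkernel Unit bool_ty (\<lambda>_ _. 1/2)"
    using vtrue_neq_vfalse by (simp add: subkernel_def tyset_bool_ty)
  moreover have "ctx_typed \<Gamma> A (let_env_ctx \<Gamma> \<gamma> Hole) [] A"
    using assms by (intro ctx_typed_let_env_ctx) (auto simp: envs_def intro: C_Hole)
  ultimately show ?thesis
    unfolding probe_ctx_def fair_coin_def by (intro C_If2 C_Prim T_Prim T_Unit typed_dirac)
qed

lemma den_plug_probe_ctx:
  assumes "\<gamma> \<in> envs \<Gamma>" and "a \<in> tyset A"
  shows "den (plug (probe_ctx \<Gamma> \<gamma> A a) u) [] b =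
           (if b = vtrue then den u \<gamma> a / 2 else 0) + (if b = vfalse then 1/2 else 0)"
proof -
  have "den (Prim A bool_ty (indicator_kernel a) (let_env \<Gamma> \<gamma> u)) [] b =
          (if b = vtrue then den u \<gamma> a else 0)"
    using assms
    by (simp add: den_let_env envs_def indicator_kernel_def sum_indicator_mult)
  then show ?thesis
    by (simp add: probe_ctx_def plug_let_env_ctx fair_coin_def den_dirac)
qed

lemma normalize_probe_ctx_vfalse:
  assumes "\<gamma> \<in> envs \<Gamma>" and "a \<in> tyset A"
  shows "normalize_on (tyset bool_ty) (den (plug (probe_ctx \<Gamma> \<gamma> A a) u) []) vfalse =
           (if den u \<gamma> a + 1 \<noteq> 0 then 1 / (den u \<gamma> a + 1) else 0)"
  using vtrue_neq_vfalse
  by (auto simp: normalize_on_def tyset_bool_ty den_plug_probe_ctx[OF assms] divide_simps)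

lemma den_eq_if_obs_equiv_probe_ctx:
  assumes "\<gamma> \<in> envs \<Gamma>" and "a \<in> tyset A"
    and "obs_equiv bool_ty (plug (probe_ctx \<Gamma> \<gamma> A a) s) (plug (probe_ctx \<Gamma> \<gamma> A a) t)"
  shows "den s \<gamma> a = den t \<gamma> a"
proof -
  have "normalize_on (tyset bool_ty) (den (plug (probe_ctx \<Gamma> \<gamma> A a) s) []) vfalse =
        normalize_on (tyset bool_ty) (den (plug (probe_ctx \<Gamma> \<gamma> A a) t) []) vfalse"
    using assms(3) by (simp add: obs_equiv_def tyset_bool_ty)
  then show ?thesis
    unfolding normalize_probe_ctx_vfalse[OF assms(1,2)]
    by (auto split: if_splits simp: divide_simps)
qed

theorem proposition6p12:
  assumes "typed \<Gamma> s A" and "typed \<Gamma> t A"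
  shows "branch_equiv \<Gamma> A s t \<longleftrightarrow>
         (\<forall>\<gamma>\<in>envs \<Gamma>. \<forall>a\<in>tyset A. den s \<gamma> a = den t \<gamma> a)"
proof
  assume "branch_equiv \<Gamma> A s t"
  then show "\<forall>\<gamma>\<in>envs \<Gamma>. \<forall>a\<in>tyset A. den s \<gamma> a = den t \<gamma> a"
    unfolding branch_equiv_def
    by (blast intro: den_eq_if_obs_equiv_probe_ctx ctx_typed_probe_ctx)
next
  assume "\<forall>\<gamma>\<in>envs \<Gamma>. \<forall>a\<in>tyset A. den s \<gamma> a = den t \<gamma> a"
  then show "branch_equiv \<Gamma> A s t"
    unfolding branch_equiv_def
    by (auto intro!: obs_equiv_if_den_eq den_plug_cong simp: envs_def)
qed

end
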